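(* Let $M\subset\mathbf{R}^d$ be a smooth closed hypersurface bounding a compact convex domain with all principal curvatures positive, let $G:M\to\mathbf{S}^{d-1}$ be its Gauss map (outer unit normal) and $h(n)=\langle G^{-1}(n),n\rangle$ its support function. Represent each oriented line uniquely as $\{m+tn:t\in\mathbf{R}\}$ with $n\in\mathbf{S}^{d-1}$ and $m\perp n$, i.e. as $(m,n)\in T^*\mathbf{S}^{d-1}$ (identifying $T_n\mathbf{S}^{d-1}$ with $T_n^*\mathbf{S}^{d-1}$ via the Euclidean inner product). Define $F:\mathbf{S}^{d-1}\times\mathbf{S}^{d-1}\setminus\Delta\to\mathbf{R}$ by $$F(n_1,n_2)=\left\langle G^{-1}\!\left(\frac{n_1-n_2}{|n_1-n_2|}\right),\,n_1-n_2\right\rangle=h\!\left(\frac{n_1-n_2}{|n_1-n_2|}\right)|n_1-n_2|.$$ Then the billiard ball map $T$ inside $M$ satisfies $$T(m_1,n_1)=(m_2,n_2)\iff m_1=D_1F(n_1,n_2),\quad m_2=-D_2F(n_1,n_2),$$ where $D_iF$ is the differential of $F$ in the $i$-th variable. Moreover, the twist condition holds: the mixed second differentials $D_{12}=D_1\circ D_2: T_{n_1}\mathbf{S}^{d-1}\to T^*_{n_2}\mathbf{S}^{d-1}$ and $D_{21}=D_2\circ D_1:T_{n_2}\mathbf{S}^{d-1}\to T^*_{n_1}\mathbf{S}^{d-1}$ of $F$ are isomorphisms.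
   Context: The billiard ball map $T$ acts on oriented lines meeting $M$: an oriented line is reflected at its exit point from the convex domain according to the law of reflection in $M$, producing the next oriented line. $\Delta$ denotes the diagonal $\{n_1=n_2\}$. *)

theory Defs
  imports "HOL-Analysis.Analysis"
begin

coinductive smooth_on :: "'a::euclidean_space set \<Rightarrow> ('a \<Rightarrow> real) \<Rightarrow> bool" for U where
  "(\<exists>Df. (\<forall>x\<in>U. (f has_derivative Df x) (at x)) \<and> (\<forall>v. smooth_on U (\<lambda>x. Df x v)))
     \<Longrightarrow> smooth_on U f"

definition gradient :: "('a::euclidean_space \<Rightarrow> real) \<Rightarrow> 'a \<Rightarrow> 'a" where
  "gradient f x = (\<Sum>b\<in>Basis. frechet_derivative f (at x) b *\<^sub>R b)"

definition hessian :: "('a::euclidean_space \<Rightarrow> real) \<Rightarrow> 'a \<Rightarrow> 'a \<Rightarrow> 'a \<Rightarrow> real" where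
  "hessian f x v w = frechet_derivative (\<lambda>y. frechet_derivative f (at y) v) (at x) w"

text \<open>m (a vector orthogonal to n, i.e. an element of T_n S^{d-1}, identified with
  T^*_n S^{d-1} via the inner product) represents the differential at n of a function f
  defined on the unit sphere. Differentiability on the sphere is expressed through the
  0-homogeneous extension x \<mapsto> f (x / |x|), whose derivative at n is the differential
  of f on tangent vectors and vanishes in the normal direction.\<close>
definition sphere_grad :: "('a::euclidean_space \<Rightarrow> real) \<Rightarrow> 'a \<Rightarrow> 'a \<Rightarrow> bool" where
  "sphere_grad f n m \<longleftrightarrow> inner m n = 0 \<and>
     ((\<lambda>x. f (x /\<^sub>R norm x)) has_derivative (\<lambda>v. inner m v)) (at n)"

text \<open>The mixed second differential D_1(D_2 F) at (n1,n2), as a linear map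
  T_{n1} S^{d-1} \<rightarrow> T^*_{n2} S^{d-1} (= n2^\<bottom>), exists and is an isomorphism.\<close>
definition mixed_D12_iso :: "('a::euclidean_space \<Rightarrow> 'a \<Rightarrow> real) \<Rightarrow> 'a \<Rightarrow> 'a \<Rightarrow> bool" where
  "mixed_D12_iso F n1 n2 \<longleftrightarrow> (\<exists>g L.
     (\<forall>x\<in>sphere 0 1. x \<noteq> n2 \<longrightarrow> sphere_grad (\<lambda>y. F x y) n2 (g x)) \<and>
     ((\<lambda>x. g (x /\<^sub>R norm x)) has_derivative L) (at n1) \<and>
     bij_betw L {u. inner u n1 = 0} {w. inner w n2 = 0})"

text \<open>Billiard ball map as a relation on oriented lines (m,n) = {m + t n}:
  the line (m1,n1) leaves the convex body K at the point p = m1 + t n1 of M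
  (the last point of the line in K), the direction is reflected in the tangent hyperplane
  at p (unit normal N p), and (m2,n2) is the reflected line through p in normal form.\<close>
definition billiard_step :: "'a::euclidean_space set \<Rightarrow> 'a set \<Rightarrow> ('a \<Rightarrow> 'a)
    \<Rightarrow> 'a \<times> 'a \<Rightarrow> 'a \<times> 'a \<Rightarrow> bool" where
  "billiard_step K M N l1 l2 \<longleftrightarrow> (case l1 of (m1, n1) \<Rightarrow> case l2 of (m2, n2) \<Rightarrow>
     (\<exists>t. let p = m1 + t *\<^sub>R n1 in
        p \<in> M \<and> (\<forall>s>t. m1 + s *\<^sub>R n1 \<notin> K) \<and>
        n2 = n1 - (2 * inner n1 (N p)) *\<^sub>R N p \<and>
        m2 = p - inner p n2 *\<^sub>R n2))"

definition gauss_map :: "('a::euclidean_space \<Rightarrow> real) \<Rightarrow> 'a \<Rightarrow> 'a" where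
  "gauss_map \<phi> x = gradient \<phi> x /\<^sub>R norm (gradient \<phi> x)"

definition gen_fun :: "'a::euclidean_space set \<Rightarrow> ('a \<Rightarrow> 'a) \<Rightarrow> 'a \<Rightarrow> 'a \<Rightarrow> real" where
  "gen_fun M G n1 n2 = inner (inv_into M G ((n1 - n2) /\<^sub>R norm (n1 - n2))) (n1 - n2)"

end

theory Submission
  imports Defs
begin

text \<open>The support point p(z) = G\<inverse>(z/|z|) maximises \<langle>-, z\<rangle> over K, so
  F(n1,n2) = h(n1 - n2) for the support function h(z) = \<langle>p(z), z\<rangle>, whose gradient is p(z).
  Hence D1 F(n1,n2) and -D2 F(n1,n2) are the tangential parts at n1 and n2 of the point
  p(n1 - n2), which is exactly where a line of direction n1 that is reflected into direction n2
  must leave K: there the outer normal is parallel to n1 - n2.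

  For the twist condition, positive curvature makes the Gauss map a local diffeomorphism, so p is
  differentiable by the inverse function theorem. Its derivative at n1 - n2 takes values orthogonal
  to n1 - n2 and kills only the radial direction; since neither n1 nor n2 is orthogonal to n1 - n2,
  composing it with the tangential projections at n1 and n2 gives an isomorphism of the tangent
  spaces.\<close>

section \<open>Unit vectors, hyperplanes and support functions\<close>

lemma unit_inner_less_one:
  fixes a b :: "'a::real_inner"
  assumes "norm a = 1" "norm b = 1" "a \<noteq> b"
  shows "a \<bullet> b < 1"
proof -
  have "a \<bullet> a = 1" "b \<bullet> b = 1" using assms(1,2) by (simp_all add: dot_square_norm)
  then have "norm (a - b)^2 = 2 - 2 * (a \<bullet> b)"
    by (simp add: power2_norm_eq_inner inner_diff_left inner_diff_right inner_commute)
  moreover have "norm (a - b)^2 > 0" using assms(3) by simp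
  ultimately show ?thesis by linarith
qed

lemma unit_inner_diff_pos:
  fixes a b :: "'a::real_inner"
  assumes "norm a = 1" "norm b = 1" "a \<noteq> b"
  shows "a \<bullet> (a - b) > 0"
  using unit_inner_less_one[OF assms] assms(1) by (simp add: inner_diff_right dot_square_norm)

lemma reflect_unit_diff:
  fixes a b :: "'a::real_inner"
  assumes "norm a = 1" "norm b = 1" "a \<noteq> b"
  shows "a - (2 * (a \<bullet> ((a - b) /\<^sub>R norm (a - b)))) *\<^sub>R ((a - b) /\<^sub>R norm (a - b)) = b"
proof -
  define d where "d = a - b"
  have "a \<bullet> a = 1" "b \<bullet> b = 1" using assms(1,2) by (simp_all add: dot_square_norm)
  then have nd: "norm d ^ 2 = 2 * (a \<bullet> d)"
    by (simp add: d_def power2_norm_eq_inner inner_diff_left inner_diff_right inner_commute)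
  have "d \<noteq> 0" using assms(3) by (simp add: d_def)
  then have coeff: "(2 * (a \<bullet> d)) / norm d ^ 2 = 1" unfolding nd[symmetric] by simp
  have "(2 * (a \<bullet> (d /\<^sub>R norm d))) *\<^sub>R (d /\<^sub>R norm d) = ((2 * (a \<bullet> d)) / norm d ^ 2) *\<^sub>R d"
    by (simp add: power2_eq_square divide_inverse mult.commute mult.left_commute)
  also have "\<dots> = d" by (simp only: coeff scaleR_one)
  finally show ?thesis by (simp add: d_def)
qed

definition tangent_proj :: "'a::real_inner \<Rightarrow> 'a \<Rightarrow> 'a" where
  "tangent_proj n v = v - (n \<bullet> v) *\<^sub>R n"

lemma linear_tangent_proj: "linear (tangent_proj n)"
  by (rule linearI) (simp_all add: tangent_proj_def inner_add_right algebra_simps)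

lemma bounded_linear_tangent_proj: "bounded_linear (tangent_proj (n::'a::euclidean_space))"
  using linear_tangent_proj linear_conv_bounded_linear by blast

lemma tangent_proj_orthogonal: "norm n = 1 \<Longrightarrow> tangent_proj n v \<bullet> n = 0"
  by (simp add: tangent_proj_def inner_diff_left inner_diff_right inner_commute dot_square_norm)

lemma tangent_proj_id: "v \<bullet> n = 0 \<Longrightarrow> tangent_proj n v = v"
  by (simp add: tangent_proj_def inner_commute)

lemma inner_tangent_proj_right: "m \<bullet> tangent_proj n v = tangent_proj n m \<bullet> v"
  by (simp add: tangent_proj_def inner_diff_left inner_diff_right inner_commute)

lemma has_derivative_normalize:
  fixes z :: "'a::real_inner"
  assumes "z \<noteq> 0"
  shows "((\<lambda>x. x /\<^sub>R norm x) has_derivative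
           (\<lambda>v. v /\<^sub>R norm z - ((z \<bullet> v) / norm z ^ 3) *\<^sub>R z)) (at z)"
proof -
  have "((\<lambda>x. inverse (norm x) *\<^sub>R x) has_derivative
      (\<lambda>v. inverse (norm z) *\<^sub>R v - (inverse (norm z) * (v \<bullet> sgn z) * inverse (norm z)) *\<^sub>R z)) (at z)"
    using has_derivative_scaleR[OF has_derivative_compose[OF has_derivative_norm[OF assms]
          has_derivative_inverse'[of "norm z" UNIV]] has_derivative_ident] assms
    by (simp add: algebra_simps)
  moreover have "inverse (norm z) * (v \<bullet> sgn z) * inverse (norm z) = (z \<bullet> v) / norm z ^ 3" for v
    by (simp add: sgn_div_norm inner_commute divide_inverse power3_eq_cube)
  ultimately show ?thesis by (simp add: divide_inverse)
qed

lemma has_derivative_normalize_unit: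
  fixes n :: "'a::real_inner"
  assumes "norm n = 1"
  shows "((\<lambda>x. x /\<^sub>R norm x) has_derivative tangent_proj n) (at n)"
proof -
  have "n \<noteq> 0" using assms by auto
  with has_derivative_normalize[of n] assms show ?thesis
    by (simp add: tangent_proj_def[abs_def])
qed

lemma sphere_grad_unique:
  assumes "sphere_grad f n m" "sphere_grad f n m'"
  shows "m = m'"
proof -
  have "(\<lambda>v. m \<bullet> v) = (\<lambda>v. m' \<bullet> v)"
    using assms unfolding sphere_grad_def by (metis has_derivative_unique)
  then have "m \<bullet> (m - m') = m' \<bullet> (m - m')" by metis
  then have "(m - m') \<bullet> (m - m') = 0" by (simp add: inner_diff_left)
  then show ?thesis by simp
qed

lemma bij_betw_orthogonal_complements:
  fixes L :: "'a::euclidean_space \<Rightarrow> 'a"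
  assumes lin: "linear L" and a: "a \<noteq> 0" and b: "b \<noteq> 0"
    and into: "\<And>u. u \<bullet> a = 0 \<Longrightarrow> L u \<bullet> b = 0"
    and ker: "\<And>u. u \<bullet> a = 0 \<Longrightarrow> L u = 0 \<Longrightarrow> u = 0"
  shows "bij_betw L {u. u \<bullet> a = 0} {w. w \<bullet> b = 0}"
proof -
  define S where "S = {u::'a. a \<bullet> u = 0}"
  define T where "T = {w::'a. b \<bullet> w = 0}"
  have S: "subspace S" and T: "subspace T" unfolding S_def T_def by (rule subspace_hyperplane)+
  have inj: "inj_on L S"
  proof (rule inj_onI)
    fix x y assume "x \<in> S" "y \<in> S" "L x = L y"
    then have "(x - y) \<bullet> a = 0" "L (x - y) = 0"
      using lin by (simp_all add: S_def inner_diff_left inner_diff_right inner_commute linear_diff)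
    then show "x = y" using ker by fastforce
  qed
  have "dim (L ` S) = dim S"
    using dim_image_eq[OF lin, of S] inj span_eq_iff[THEN iffD2, OF S] by simp
  also have "\<dots> = dim T" using dim_hyperplane[OF a] dim_hyperplane[OF b] by (simp add: S_def T_def)
  finally have "dim (L ` S) = dim T" .
  moreover have "L ` S \<subseteq> T" using into by (auto simp: S_def T_def inner_commute)
  ultimately have "L ` S = T"
    using subspace_dim_equal[OF linear_subspace_image[OF lin S] T] by simp
  with inj show ?thesis unfolding bij_betw_def S_def T_def by (simp add: inner_commute)
qed

text \<open>Both mixed second differentials of the generating function have this shape.\<close>
lemma bij_betw_tangent_proj_comp:
  fixes B :: "'a::euclidean_space \<Rightarrow> 'a"
  assumes lin: "linear B" and a: "norm a = 1" and b: "norm b = 1"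
    and az: "a \<bullet> z \<noteq> 0" and bz: "b \<bullet> z \<noteq> 0"
    and image: "\<And>u. z \<bullet> B u = 0" and kernel: "\<And>u. B u = 0 \<Longrightarrow> \<exists>c. u = c *\<^sub>R z"
  shows "bij_betw (\<lambda>u. tangent_proj b (B (tangent_proj a u))) {u. u \<bullet> a = 0} {w. w \<bullet> b = 0}"
proof -
  have "bij_betw (\<lambda>u. tangent_proj b (B u)) {u. u \<bullet> a = 0} {w. w \<bullet> b = 0}"
  proof (rule bij_betw_orthogonal_complements)
    show "linear (\<lambda>u. tangent_proj b (B u))"
      using linear_compose[OF lin linear_tangent_proj] by (simp add: o_def)
    show "a \<noteq> 0" "b \<noteq> 0" using a b by auto
    show "tangent_proj b (B u) \<bullet> b = 0" for u using tangent_proj_orthogonal[OF b] .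
    fix u assume u: "u \<bullet> a = 0" and "tangent_proj b (B u) = 0"
    then have Bu: "B u = (b \<bullet> B u) *\<^sub>R b" by (simp add: tangent_proj_def)
    then have "(b \<bullet> B u) * (b \<bullet> z) = 0" using image[of u] by (metis inner_commute inner_scaleR_left)
    then have "B u = 0" using Bu bz by simp
    then obtain c where c: "u = c *\<^sub>R z" using kernel by blast
    then have "c * (a \<bullet> z) = 0" using u by (simp add: inner_commute)
    then show "u = 0" using c az by simp
  qed
  then show ?thesis by (rule bij_betw_cong[THEN iffD1, rotated]) (simp add: tangent_proj_id)
qed

lemma support_function_has_derivative:
  fixes p :: "'a::real_inner \<Rightarrow> 'a"
  assumes S: "open S" "z0 \<in> S" and cont: "continuous (at z0) p"
    and max: "\<And>z w. z \<in> S \<Longrightarrow> w \<in> S \<Longrightarrow> p w \<bullet> z \<le> p z \<bullet> z"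
  shows "((\<lambda>z. p z \<bullet> z) has_derivative (\<lambda>v. p z0 \<bullet> v)) (at z0)"
  unfolding has_derivative_at_alt
proof (intro conjI allI impI)
  show "bounded_linear ((\<bullet>) (p z0))" by (rule bounded_linear_inner_right)
  fix e :: real assume "e > 0"
  then obtain d where d: "d > 0" "\<And>y. dist y z0 < d \<Longrightarrow> dist (p y) (p z0) < e"
    using cont unfolding continuous_at_eps_delta by blast
  obtain r where r: "r > 0" "ball z0 r \<subseteq> S" using S open_contains_ball by blast
  show "\<exists>d>0. \<forall>y. norm (y - z0) < d \<longrightarrow>
          norm (p y \<bullet> y - p z0 \<bullet> z0 - p z0 \<bullet> (y - z0)) \<le> e * norm (y - z0)"
  proof (intro exI[of _ "min d r"] conjI allI impI)
    show "min d r > 0" using d r by simp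
    fix y assume y: "norm (y - z0) < min d r"
    then have "y \<in> S" using r by (auto simp: dist_norm norm_minus_commute)
    have lo: "p z0 \<bullet> y \<le> p y \<bullet> y" using max[OF \<open>y \<in> S\<close> S(2)] .
    have "p y \<bullet> z0 \<le> p z0 \<bullet> z0" using max[OF S(2) \<open>y \<in> S\<close>] .
    then have "p y \<bullet> y - p z0 \<bullet> y \<le> (p y - p z0) \<bullet> (y - z0)"
      by (simp add: inner_diff_left inner_diff_right)
    also have "\<dots> \<le> norm (p y - p z0) * norm (y - z0)" by (rule norm_cauchy_schwarz)
    also have "\<dots> \<le> e * norm (y - z0)"
      using d(2)[of y] y by (intro mult_right_mono) (auto simp: dist_norm)
    finally show "norm (p y \<bullet> y - p z0 \<bullet> z0 - p z0 \<bullet> (y - z0)) \<le> e * norm (y - z0)"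
      using lo by (simp add: inner_diff_right)
  qed
qed

section \<open>Smooth convex bodies with positive curvature\<close>

lemma smooth_on_UNIV_D:
  assumes "smooth_on UNIV f"
  shows "(f has_derivative frechet_derivative f (at x)) (at x)"
    and "smooth_on UNIV (\<lambda>x. frechet_derivative f (at x) v)"
proof -
  have "\<exists>Df. (\<forall>x\<in>UNIV. (f has_derivative Df x) (at x)) \<and> (\<forall>v. smooth_on UNIV (\<lambda>x. Df x v))"
    using assms by (rule smooth_on.cases) simp
  then obtain Df where Df: "\<And>x. (f has_derivative Df x) (at x)"
    and sm: "\<And>v. smooth_on UNIV (\<lambda>x. Df x v)" by blast
  have "Df = (\<lambda>x. frechet_derivative f (at x))"
    using frechet_derivative_at[OF Df] by (rule ext)
  with Df sm show "(f has_derivative frechet_derivative f (at x)) (at x)"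
    and "smooth_on UNIV (\<lambda>x. frechet_derivative f (at x) v)" by simp_all
qed

locale convex_billiard_table =
  fixes \<phi> :: "'a::euclidean_space \<Rightarrow> real" and K M :: "'a set"
  assumes smooth: "smooth_on UNIV \<phi>"
    and K_def: "K = {x. \<phi> x \<le> 0}"
    and M_def: "M = {x. \<phi> x = 0}"
    and compact: "compact K" and convex: "convex K" and domain: "interior K \<noteq> {}"
    and regular: "\<forall>x\<in>M. gradient \<phi> x \<noteq> 0"
    and curvature: "\<forall>x\<in>M. \<forall>v. v \<noteq> 0 \<and> inner v (gradient \<phi> x) = 0 \<longrightarrow> hessian \<phi> x v v > 0"
begin

abbreviation grad :: "'a \<Rightarrow> 'a" where "grad \<equiv> gradient \<phi>"
abbreviation G :: "'a \<Rightarrow> 'a" where "G \<equiv> gauss_map \<phi>"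

lemma has_derivative_frechet_phi: "(\<phi> has_derivative frechet_derivative \<phi> (at x)) (at x)"
  by (rule smooth_on_UNIV_D(1)[OF smooth])

lemma smooth_partial: "smooth_on UNIV (\<lambda>x. frechet_derivative \<phi> (at x) v)"
  by (rule smooth_on_UNIV_D(2)[OF smooth])

lemma has_derivative_partial:
  "((\<lambda>y. frechet_derivative \<phi> (at y) v) has_derivative hessian \<phi> x v) (at x)"
  using smooth_on_UNIV_D(1)[OF smooth_partial] by (simp add: hessian_def[abs_def])

lemma continuous_hessian: "continuous (at x) (\<lambda>y. hessian \<phi> y v w)"
  using has_derivative_continuous[OF smooth_on_UNIV_D(1)[OF smooth_on_UNIV_D(2)[OF smooth_partial]]]
  by (simp add: hessian_def)

lemma continuous_phi: "continuous (at x) \<phi>"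
  using has_derivative_frechet_phi by (rule has_derivative_continuous)

lemma inner_gradient: "grad x \<bullet> w = frechet_derivative \<phi> (at x) w"
proof -
  have lin: "linear (frechet_derivative \<phi> (at x))"
    using has_derivative_frechet_phi has_derivative_linear by blast
  have "grad x \<bullet> w = (\<Sum>b\<in>Basis. frechet_derivative \<phi> (at x) b * (b \<bullet> w))"
    by (simp add: gradient_def inner_sum_left)
  also have "\<dots> = frechet_derivative \<phi> (at x) (\<Sum>b\<in>Basis. (w \<bullet> b) *\<^sub>R b)"
    using lin by (simp add: linear_sum linear_scale mult.commute inner_commute)
  finally show ?thesis by (simp add: euclidean_representation)
qed

lemma has_derivative_phi: "(\<phi> has_derivative (\<lambda>w. grad x \<bullet> w)) (at x)"
  using has_derivative_frechet_phi by (simp add: inner_gradient[abs_def])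

lemma has_derivative_inner_gradient:
  "((\<lambda>y. grad y \<bullet> v) has_derivative hessian \<phi> x v) (at x)"
  using has_derivative_partial by (simp add: inner_gradient)

definition hess_vec :: "'a \<Rightarrow> 'a \<Rightarrow> 'a" where
  "hess_vec x w = (\<Sum>b\<in>Basis. hessian \<phi> x b w *\<^sub>R b)"

lemma inner_hess_vec: "hess_vec x w \<bullet> v = hessian \<phi> x v w"
proof -
  have "((\<lambda>y. grad y \<bullet> v) has_derivative (\<lambda>w. \<Sum>b\<in>Basis. (v \<bullet> b) * hessian \<phi> x b w)) (at x)"
    unfolding inner_gradient
    by (subst euclidean_representation[of v, symmetric])
      (simp add: inner_gradient[symmetric] inner_sum_right inner_commute[of _ v],
        intro has_derivative_sum has_derivative_mult_right has_derivative_inner_gradient)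
  then have "hessian \<phi> x v w = (\<Sum>b\<in>Basis. (v \<bullet> b) * hessian \<phi> x b w)"
    using has_derivative_unique[OF has_derivative_inner_gradient] by metis
  then show ?thesis by (simp add: hess_vec_def inner_sum_left inner_sum_right inner_commute mult.commute)
qed

lemma has_derivative_gradient: "(grad has_derivative hess_vec x) (at x)"
proof -
  have "grad = (\<lambda>y. \<Sum>b\<in>Basis. (grad y \<bullet> b) *\<^sub>R b)" by (simp add: euclidean_representation)
  moreover have "((\<lambda>y. \<Sum>b\<in>Basis. (grad y \<bullet> b) *\<^sub>R b) has_derivative hess_vec x) (at x)"
    unfolding hess_vec_def[abs_def]
    by (intro has_derivative_sum has_derivative_scaleR_left has_derivative_inner_gradient)
  ultimately show ?thesis by simp
qed

lemma continuous_gradient: "continuous (at x) grad"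
  using has_derivative_gradient by (rule has_derivative_continuous)

lemma continuous_hess_vec: "continuous (at x) (\<lambda>y. hess_vec y w)"
  unfolding hess_vec_def by (intro continuous_intros continuous_hessian)

lemma M_subset_K: "M \<subseteq> K"
  by (auto simp: M_def K_def)

lemma compact_M: "compact M"
proof -
  have "closed M"
    using continuous_closed_preimage_constant[of UNIV \<phi> 0] continuous_phi
    by (simp add: M_def continuous_at_imp_continuous_on)
  then show ?thesis using compact_Int_closed[OF compact, of M] M_subset_K by (simp add: Int_absorb1)
qed

lemma gradient_nonzero: "x \<in> M \<Longrightarrow> grad x \<noteq> 0"
  using regular by blast

lemma norm_gauss_map: "x \<in> M \<Longrightarrow> norm (G x) = 1"
  using gradient_nonzero by (simp add: gauss_map_def)

lemma gradient_eq_scaled_gauss_map: "x \<in> M \<Longrightarrow> grad x = norm (grad x) *\<^sub>R G x"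
  using gradient_nonzero by (simp add: gauss_map_def)

lemma has_real_derivative_along_line:
  "((\<lambda>t. \<phi> (x + t *\<^sub>R v)) has_real_derivative (grad (x + t0 *\<^sub>R v) \<bullet> v)) (at t0)"
proof -
  have "((\<lambda>t. x + t *\<^sub>R v) has_derivative (\<lambda>t. t *\<^sub>R v)) (at t0)"
    by (auto intro!: derivative_eq_intros)
  from has_derivative_compose[OF this has_derivative_phi] show ?thesis
    by (simp add: has_field_derivative_def o_def mult_commute_abs)
qed

lemma has_real_derivative_gradient_along_line:
  "((\<lambda>t. grad (x + t *\<^sub>R v) \<bullet> v) has_real_derivative hessian \<phi> (x + t0 *\<^sub>R v) v v) (at t0)"
proof -
  have "((\<lambda>t. x + t *\<^sub>R v) has_derivative (\<lambda>t. t *\<^sub>R v)) (at t0)"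
    by (auto intro!: derivative_eq_intros)
  from has_derivative_compose[OF this has_derivative_inner_gradient]
  have "((\<lambda>t. grad (x + t *\<^sub>R v) \<bullet> v) has_derivative
          (\<lambda>t. hessian \<phi> (x + t0 *\<^sub>R v) v (t *\<^sub>R v))) (at t0)"
    by (simp add: o_def)
  moreover have "linear (hessian \<phi> (x + t0 *\<^sub>R v) v)"
    using has_derivative_inner_gradient has_derivative_linear by blast
  ultimately show ?thesis
    by (simp add: has_field_derivative_def linear_scale mult_commute_abs)
qed

lemma descent_direction_into_K:
  assumes "x \<in> M" "grad x \<bullet> v < 0"
  obtains d where "d > 0" "\<And>h. 0 < h \<Longrightarrow> h < d \<Longrightarrow> x + h *\<^sub>R v \<in> K"
proof -
  obtain d where "d > 0" and d: "\<And>h. 0 < h \<Longrightarrow> h < d \<Longrightarrow> \<phi> (x + h *\<^sub>R v) < \<phi> x"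
    using DERIV_neg_dec_right[OF has_real_derivative_along_line[of x v 0]] assms(2) by auto
  moreover have "\<phi> x = 0" using assms(1) by (simp add: M_def)
  ultimately show ?thesis using that by (fastforce simp: K_def)
qed

lemma gauss_map_supporting:
  assumes x: "x \<in> M" and y: "y \<in> K"
  shows "y \<bullet> G x \<le> x \<bullet> G x"
proof -
  have "grad x \<bullet> (y - x) \<le> 0"
  proof (rule ccontr)
    assume "\<not> ?thesis"
    then obtain d where "d > 0"
      and d: "\<And>h. 0 < h \<Longrightarrow> h < d \<Longrightarrow> \<phi> x < \<phi> (x + h *\<^sub>R (y - x))"
      using DERIV_pos_inc_right[OF has_real_derivative_along_line[of x "y - x" 0]] by auto
    define h where "h = min (d/2) 1"
    have h: "0 < h" "h < d" "h \<le> 1" using \<open>d > 0\<close> by (auto simp: h_def)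
    have "x + h *\<^sub>R (y - x) = (1 - h) *\<^sub>R x + h *\<^sub>R y" by (simp add: algebra_simps)
    also have "\<dots> \<in> K" using convexD_alt[OF convex] x y M_subset_K h by auto
    finally show False using d[OF h(1,2)] x by (simp add: K_def M_def)
  qed
  then have "norm (grad x) * (G x \<bullet> (y - x)) \<le> 0"
    using gradient_eq_scaled_gauss_map[OF x] by (metis inner_scaleR_left)
  then show ?thesis
    using gradient_nonzero[OF x] by (simp add: mult_le_0_iff inner_diff_right inner_commute)
qed

lemma maximizer_in_M:
  assumes u: "norm u = 1" and x: "x \<in> K" and max: "\<And>y. y \<in> K \<Longrightarrow> y \<bullet> u \<le> x \<bullet> u"
  shows "x \<in> M" "G x = u"
proof -
  have uu: "u \<bullet> u = 1" using u by (simp add: dot_square_norm)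
  show xM: "x \<in> M"
  proof (rule ccontr)
    assume "x \<notin> M"
    then have "\<phi> x < 0" using x by (auto simp: K_def M_def)
    then obtain d where "d > 0" and d: "\<And>y. dist y x < d \<Longrightarrow> dist (\<phi> y) (\<phi> x) < - \<phi> x"
      using continuous_phi[of x] unfolding continuous_at_eps_delta by (meson neg_0_less_iff_less)
    have "dist (x + (d/2) *\<^sub>R u) x < d" using \<open>d > 0\<close> u by (simp add: dist_norm)
    then have "x + (d/2) *\<^sub>R u \<in> K" using d by (force simp: K_def dist_real_def abs_less_iff)
    then show False using max \<open>d > 0\<close> uu by (fastforce simp: inner_add_left)
  qed
  show "G x = u"
  proof (rule ccontr)
    assume "G x \<noteq> u"
    then have lt: "G x \<bullet> u < 1" using unit_inner_less_one norm_gauss_map[OF xM] u by blast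
    have "grad x \<bullet> (u - G x) = norm (grad x) * (G x \<bullet> u - 1)"
      using norm_gauss_map[OF xM]
      by (subst gradient_eq_scaled_gauss_map[OF xM]) (simp add: inner_diff_right dot_square_norm right_diff_distrib)
    also have "\<dots> < 0" using lt gradient_nonzero[OF xM] by (simp add: mult_pos_neg)
    finally obtain d where "d > 0" and d: "\<And>h. 0 < h \<Longrightarrow> h < d \<Longrightarrow> x + h *\<^sub>R (u - G x) \<in> K"
      using descent_direction_into_K[OF xM] by blast
    have "(x + (d/2) *\<^sub>R (u - G x)) \<bullet> u \<le> x \<bullet> u" using max d[of "d/2"] \<open>d > 0\<close> by simp
    then show False
      using \<open>d > 0\<close> lt uu by (simp add: inner_add_left inner_diff_left mult_le_0_iff)
  qed
qed

lemma gauss_map_inj_on: "inj_on G M"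
proof (rule inj_onI, rule ccontr)
  fix x y assume x: "x \<in> M" and y: "y \<in> M" and eq: "G x = G y" and "x \<noteq> y"
  define v where "v = y - x"
  have "v \<noteq> 0" using \<open>x \<noteq> y\<close> by (simp add: v_def)
  have "y \<bullet> G x \<le> x \<bullet> G x" "x \<bullet> G x \<le> y \<bullet> G x"
    using gauss_map_supporting[OF x] gauss_map_supporting[OF y] x y M_subset_K eq by auto
  then have "G x \<bullet> v = 0" unfolding v_def inner_diff_right by (simp add: inner_commute)
  then have "grad x \<bullet> v = 0" using gradient_eq_scaled_gauss_map[OF x] by (metis inner_scaleR_left mult_zero_right)
  then have "hessian \<phi> x v v > 0"
    using curvature x \<open>v \<noteq> 0\<close> by (simp add: inner_commute)
  then obtain d where "d > 0"
    and d: "\<And>h. 0 < h \<Longrightarrow> h < d \<Longrightarrow> grad x \<bullet> v < grad (x + h *\<^sub>R v) \<bullet> v"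
    using DERIV_pos_inc_right[OF has_real_derivative_gradient_along_line[of x v 0]] by auto
  define h where "h = min (d/2) 1"
  have h: "0 < h" "h < d" "h \<le> 1" using \<open>d > 0\<close> by (auto simp: h_def)
  obtain t where t: "0 < t" "t < h" "\<phi> (x + h *\<^sub>R v) - \<phi> x = h * (grad (x + t *\<^sub>R v) \<bullet> v)"
    using MVT2[OF h(1) has_real_derivative_along_line[of x v]] by auto
  have "grad (x + t *\<^sub>R v) \<bullet> v > 0" using d[of t] t h \<open>grad x \<bullet> v = 0\<close> by simp
  then have "\<phi> (x + h *\<^sub>R v) > \<phi> x" using t(3) h(1) by (simp add: algebra_simps)
  moreover have "x + h *\<^sub>R v \<in> K"
  proof -
    have "x \<in> K" "y \<in> K" using x y M_subset_K by auto
    moreover have "x + h *\<^sub>R v = (1 - h) *\<^sub>R x + h *\<^sub>R y" by (simp add: v_def algebra_simps)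
    ultimately show ?thesis using convexD_alt[OF convex] h by simp
  qed
  ultimately show False using x by (simp add: K_def M_def)
qed

lemma gauss_map_image: "G ` M = sphere 0 1"
proof
  show "G ` M \<subseteq> sphere 0 1" using norm_gauss_map by auto
  show "sphere 0 1 \<subseteq> G ` M"
  proof
    fix u :: 'a assume "u \<in> sphere 0 1"
    then have u: "norm u = 1" by simp
    have "K \<noteq> {}" using domain interior_subset by blast
    moreover have "continuous_on K (\<lambda>y. y \<bullet> u)" by (intro continuous_intros)
    ultimately obtain x where "x \<in> K" "\<And>y. y \<in> K \<Longrightarrow> y \<bullet> u \<le> x \<bullet> u"
      using continuous_attains_sup[OF compact] by blast
    with maximizer_in_M[OF u] show "u \<in> G ` M" by (metis imageI)
  qed
qed

section \<open>The support point and the generating function\<close>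

definition support_point :: "'a \<Rightarrow> 'a" where
  "support_point z = inv_into M G (z /\<^sub>R norm z)"

lemma support_point_in_M: "z \<noteq> 0 \<Longrightarrow> support_point z \<in> M"
  unfolding support_point_def by (rule inv_into_into) (simp add: gauss_map_image)

lemma gauss_map_support_point: "z \<noteq> 0 \<Longrightarrow> G (support_point z) = z /\<^sub>R norm z"
  unfolding support_point_def by (rule f_inv_into_f) (simp add: gauss_map_image)

lemma support_point_gauss_map: "x \<in> M \<Longrightarrow> support_point (G x) = x"
  using norm_gauss_map[of x] inv_into_f_f[OF gauss_map_inj_on] by (simp add: support_point_def)

lemma support_point_normalize: "support_point (z /\<^sub>R norm z) = support_point z"
  by (cases "z = 0") (simp_all add: support_point_def)

lemma support_point_maximizes:
  assumes "z \<noteq> 0" "y \<in> K"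
  shows "y \<bullet> z \<le> support_point z \<bullet> z"
proof -
  have "y \<bullet> (z /\<^sub>R norm z) \<le> support_point z \<bullet> (z /\<^sub>R norm z)"
    using gauss_map_supporting[OF support_point_in_M[OF assms(1)] assms(2)]
    by (simp add: gauss_map_support_point[OF assms(1)])
  then show ?thesis using assms(1) by (simp add: divide_le_cancel)
qed

lemma continuous_on_support_point: "continuous_on (- {0}) support_point"
proof -
  have "continuous_on M grad" using continuous_gradient by (simp add: continuous_at_imp_continuous_on)
  then have "continuous_on M G"
    unfolding gauss_map_def[abs_def] using gradient_nonzero by (auto intro!: continuous_intros)
  from continuous_on_inv[OF this compact_M] have "continuous_on (G ` M) support_point"
    using support_point_gauss_map by blast
  then have "continuous_on (sphere 0 1) support_point" by (simp only: gauss_map_image)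
  moreover have "(\<lambda>z. z /\<^sub>R norm z) ` (- {0}) \<subseteq> sphere 0 1"
    by (auto simp: sgn_div_norm[symmetric] norm_sgn split: if_splits)
  moreover have "continuous_on (- {0}) (\<lambda>z. z /\<^sub>R norm z)" by (auto intro!: continuous_intros)
  ultimately have "continuous_on (- {0}) (\<lambda>z. support_point (z /\<^sub>R norm z))"
    using continuous_on_compose continuous_on_subset unfolding o_def by blast
  then show ?thesis by (simp add: support_point_normalize)
qed

lemma continuous_support_point: "z \<noteq> 0 \<Longrightarrow> continuous (at z) support_point"
  using continuous_on_support_point by (simp add: continuous_on_eq_continuous_at open_Compl)

lemma has_derivative_support_function:
  "z0 \<noteq> 0 \<Longrightarrow> ((\<lambda>z. support_point z \<bullet> z) has_derivative (\<lambda>v. support_point z0 \<bullet> v)) (at z0)"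
proof (rule support_function_has_derivative[of "- {0}"])
  fix z w :: 'a assume "z \<in> - {0}" "w \<in> - {0}"
  then show "support_point w \<bullet> z \<le> support_point z \<bullet> z"
    using support_point_maximizes support_point_in_M M_subset_K by (simp add: inner_commute subset_iff)
qed (simp_all add: open_Compl continuous_support_point)

lemma gen_fun_eq: "gen_fun M G x y = support_point (x - y) \<bullet> (x - y)"
  by (simp add: gen_fun_def support_point_def)

lemma sphere_grad_gen_fun_left:
  assumes a: "norm a = 1" and "norm b = 1" "a \<noteq> b"
  shows "sphere_grad (\<lambda>x. gen_fun M G x b) a (tangent_proj a (support_point (a - b)))"
  unfolding sphere_grad_def gen_fun_eq
proof
  show "tangent_proj a (support_point (a - b)) \<bullet> a = 0" using tangent_proj_orthogonal[OF a] .
  have d: "((\<lambda>x. x /\<^sub>R norm x - b) has_derivative tangent_proj a) (at a)"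
    using has_derivative_diff[OF has_derivative_normalize_unit[OF a] has_derivative_const[of b]] by simp
  have "a /\<^sub>R norm a - b \<noteq> 0" using assms by simp
  note has_derivative_compose[OF d has_derivative_support_function[OF this]]
  moreover have "a /\<^sub>R norm a - b = a - b" using a by simp
  moreover have "(\<lambda>v. support_point (a - b) \<bullet> tangent_proj a v) = (\<bullet>) (tangent_proj a (support_point (a - b)))"
    by (simp add: fun_eq_iff inner_tangent_proj_right)
  ultimately show "((\<lambda>x. support_point (x /\<^sub>R norm x - b) \<bullet> (x /\<^sub>R norm x - b)) has_derivative
      (\<bullet>) (tangent_proj a (support_point (a - b)))) (at a)"
    by (simp only:)
qed

lemma sphere_grad_gen_fun_right:
  assumes "norm a = 1" and b: "norm b = 1" and "a \<noteq> b"
  shows "sphere_grad (\<lambda>y. gen_fun M G a y) b (- tangent_proj b (support_point (a - b)))"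
  unfolding sphere_grad_def gen_fun_eq
proof
  show "(- tangent_proj b (support_point (a - b))) \<bullet> b = 0"
    using tangent_proj_orthogonal[OF b] by simp
  have d: "((\<lambda>y. a - y /\<^sub>R norm y) has_derivative (\<lambda>v. - tangent_proj b v)) (at b)"
    using has_derivative_diff[OF has_derivative_const[of a] has_derivative_normalize_unit[OF b]] by simp
  have "a - b /\<^sub>R norm b \<noteq> 0" using assms by simp
  note has_derivative_compose[OF d has_derivative_support_function[OF this]]
  moreover have "a - b /\<^sub>R norm b = a - b" using b by simp
  moreover have "(\<lambda>v. support_point (a - b) \<bullet> - tangent_proj b v) = (\<bullet>) (- tangent_proj b (support_point (a - b)))"
    by (simp add: fun_eq_iff inner_tangent_proj_right)
  ultimately show "((\<lambda>y. support_point (a - y /\<^sub>R norm y) \<bullet> (a - y /\<^sub>R norm y)) has_derivative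
      (\<bullet>) (- tangent_proj b (support_point (a - b)))) (at b)"
    by (simp only:)
qed

lemma sphere_grad_gen_fun_iff:
  assumes "norm n1 = 1" "norm n2 = 1" "n1 \<noteq> n2"
  shows "sphere_grad (\<lambda>x. gen_fun M G x n2) n1 m1 \<and> sphere_grad (\<lambda>y. gen_fun M G n1 y) n2 (- m2)
    \<longleftrightarrow> m1 = tangent_proj n1 (support_point (n1 - n2)) \<and> m2 = tangent_proj n2 (support_point (n1 - n2))"
proof -
  have "sphere_grad (\<lambda>x. gen_fun M G x n2) n1 m1 \<longleftrightarrow> m1 = tangent_proj n1 (support_point (n1 - n2))"
    using sphere_grad_gen_fun_left[OF assms] sphere_grad_unique by metis
  moreover have "sphere_grad (\<lambda>y. gen_fun M G n1 y) n2 (- m2) \<longleftrightarrow>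
      m2 = tangent_proj n2 (support_point (n1 - n2))"
    using sphere_grad_gen_fun_right[OF assms] sphere_grad_unique by (metis neg_equal_iff_equal)
  ultimately show ?thesis by simp
qed

section \<open>The billiard map\<close>

lemma leaving_direction_outward:
  assumes x: "x \<in> M" and leaves: "\<And>s. s > 0 \<Longrightarrow> x + s *\<^sub>R v \<notin> K"
  shows "v \<bullet> G x \<ge> 0"
proof (rule ccontr)
  assume "\<not> ?thesis"
  then have "grad x \<bullet> v < 0"
    using gradient_eq_scaled_gauss_map[OF x] gradient_nonzero[OF x]
    by (metis inner_commute inner_scaleR_left mult_pos_neg not_le zero_less_norm_iff)
  then obtain d where "d > 0" "\<And>h. 0 < h \<Longrightarrow> h < d \<Longrightarrow> x + h *\<^sub>R v \<in> K"
    using descent_direction_into_K[OF x] by blast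
  then show False using leaves[of "d/2"] by simp
qed

lemma reflection_point_eq_support_point:
  assumes q: "q \<in> M" and leaves: "\<And>s. s > 0 \<Longrightarrow> q + s *\<^sub>R n1 \<notin> K"
    and refl: "n2 = n1 - (2 * (n1 \<bullet> G q)) *\<^sub>R G q" and "n1 \<noteq> n2"
  shows "support_point (n1 - n2) = q"
proof -
  have "n1 \<bullet> G q \<ge> 0" using leaving_direction_outward[OF q leaves] .
  moreover have "n1 \<bullet> G q \<noteq> 0" using refl \<open>n1 \<noteq> n2\<close> by auto
  ultimately have "n1 \<bullet> G q > 0" by simp
  moreover have "n1 - n2 = (2 * (n1 \<bullet> G q)) *\<^sub>R G q" using refl by simp
  ultimately have "(n1 - n2) /\<^sub>R norm (n1 - n2) = G q" using norm_gauss_map[OF q] by simp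
  then show ?thesis
    using support_point_normalize[of "n1 - n2"] support_point_gauss_map[OF q] by simp
qed

lemma support_point_leaving_line:
  assumes "z \<noteq> 0" "n \<bullet> z > 0" "s > 0"
  shows "support_point z + s *\<^sub>R n \<notin> K"
proof
  assume "support_point z + s *\<^sub>R n \<in> K"
  then have "(support_point z + s *\<^sub>R n) \<bullet> z \<le> support_point z \<bullet> z"
    using support_point_maximizes[OF assms(1)] by blast
  then show False using assms(2,3) by (simp add: inner_add_left mult_le_0_iff)
qed

lemma billiard_step_iff:
  assumes n1: "norm n1 = 1" and n2: "norm n2 = 1" and "n1 \<noteq> n2" and m1: "m1 \<bullet> n1 = 0"
  shows "billiard_step K M G (m1, n1) (m2, n2) \<longleftrightarrow>
    m1 = tangent_proj n1 (support_point (n1 - n2)) \<and> m2 = tangent_proj n2 (support_point (n1 - n2))"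
proof -
  define d where "d = n1 - n2"
  have "d \<noteq> 0" using \<open>n1 \<noteq> n2\<close> by (simp add: d_def)
  show ?thesis unfolding billiard_step_def Let_def prod.case d_def[symmetric]
  proof
    assume "\<exists>t. m1 + t *\<^sub>R n1 \<in> M \<and> (\<forall>s>t. m1 + s *\<^sub>R n1 \<notin> K) \<and>
        n2 = n1 - (2 * (n1 \<bullet> G (m1 + t *\<^sub>R n1))) *\<^sub>R G (m1 + t *\<^sub>R n1) \<and>
        m2 = m1 + t *\<^sub>R n1 - ((m1 + t *\<^sub>R n1) \<bullet> n2) *\<^sub>R n2"
    then obtain t q where q: "q = m1 + t *\<^sub>R n1" "q \<in> M" and leaves: "\<forall>s>t. m1 + s *\<^sub>R n1 \<notin> K"
      and refl: "n2 = n1 - (2 * (n1 \<bullet> G q)) *\<^sub>R G q" and m2: "m2 = q - (q \<bullet> n2) *\<^sub>R n2"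
      by blast
    have "q + s *\<^sub>R n1 \<notin> K" if "s > 0" for s
      using leaves[rule_format, of "t + s"] that by (simp add: q(1) algebra_simps)
    then have "support_point d = q"
      using reflection_point_eq_support_point[OF q(2) _ refl \<open>n1 \<noteq> n2\<close>] by (simp add: d_def)
    moreover have "q \<bullet> n1 = t" using m1 n1 by (simp add: q(1) inner_add_left dot_square_norm)
    ultimately show "m1 = tangent_proj n1 (support_point d) \<and> m2 = tangent_proj n2 (support_point d)"
      using m2 by (simp add: tangent_proj_def q(1) inner_commute)
  next
    assume m: "m1 = tangent_proj n1 (support_point d) \<and> m2 = tangent_proj n2 (support_point d)"
    define t where "t = n1 \<bullet> support_point d"
    have q: "m1 + t *\<^sub>R n1 = support_point d" using m by (simp add: t_def tangent_proj_def)
    show "\<exists>t. m1 + t *\<^sub>R n1 \<in> M \<and> (\<forall>s>t. m1 + s *\<^sub>R n1 \<notin> K) \<and>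
        n2 = n1 - (2 * (n1 \<bullet> G (m1 + t *\<^sub>R n1))) *\<^sub>R G (m1 + t *\<^sub>R n1) \<and>
        m2 = m1 + t *\<^sub>R n1 - ((m1 + t *\<^sub>R n1) \<bullet> n2) *\<^sub>R n2"
    proof (intro exI[of _ t] conjI allI impI)
      show "m1 + t *\<^sub>R n1 \<in> M" using q support_point_in_M[OF \<open>d \<noteq> 0\<close>] by simp
      show "n2 = n1 - (2 * (n1 \<bullet> G (m1 + t *\<^sub>R n1))) *\<^sub>R G (m1 + t *\<^sub>R n1)"
        using q gauss_map_support_point[OF \<open>d \<noteq> 0\<close>] reflect_unit_diff[OF assms(1-3)]
        by (simp add: d_def)
      show "m2 = m1 + t *\<^sub>R n1 - ((m1 + t *\<^sub>R n1) \<bullet> n2) *\<^sub>R n2"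
        unfolding q using m by (simp add: tangent_proj_def inner_commute)
      fix s assume "t < s"
      have "n1 \<bullet> d > 0" using unit_inner_diff_pos[OF assms(1-3)] by (simp add: d_def)
      then have "support_point d + (s - t) *\<^sub>R n1 \<notin> K"
        using support_point_leaving_line[OF \<open>d \<noteq> 0\<close>] \<open>t < s\<close> by simp
      moreover have "m1 + s *\<^sub>R n1 = support_point d + (s - t) *\<^sub>R n1"
        using q by (simp add: algebra_simps)
      ultimately show "m1 + s *\<^sub>R n1 \<notin> K" by simp
    qed
  qed
qed

section \<open>Differentiability of the support point\<close>

text \<open>An extension of the Gauss map off M whose derivative is invertible along M:
  the factor 1 + \<phi> makes it grow in the normal direction. Its local inverse near M
  is the inverse of the Gauss map, which is therefore differentiable.\<close>
definition gauss_ext :: "'a \<Rightarrow> 'a" where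
  "gauss_ext x = ((1 + \<phi> x) / norm (grad x)) *\<^sub>R grad x"

definition gauss_ext_deriv :: "'a \<Rightarrow> 'a \<Rightarrow> 'a" where
  "gauss_ext_deriv x w =
     ((grad x \<bullet> w) / norm (grad x) - (1 + \<phi> x) * ((grad x \<bullet> hess_vec x w) / norm (grad x) ^ 3)) *\<^sub>R grad x
     + ((1 + \<phi> x) / norm (grad x)) *\<^sub>R hess_vec x w"

lemma gauss_ext_eq_gauss_map: "x \<in> M \<Longrightarrow> gauss_ext x = G x"
  by (simp add: gauss_ext_def gauss_map_def M_def divide_inverse)

lemma open_regular_points: "open {x. grad x \<noteq> 0}"
  using continuous_open_vimage[of "- {0}" grad] continuous_gradient by (auto simp: vimage_def)

lemma has_derivative_norm_gradient:
  assumes "grad x \<noteq> 0"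
  shows "((\<lambda>y. norm (grad y)) has_derivative (\<lambda>w. (grad x \<bullet> hess_vec x w) / norm (grad x))) (at x)"
proof -
  have "((\<lambda>y. norm (grad y)) has_derivative (\<lambda>w. hess_vec x w \<bullet> sgn (grad x))) (at x)"
    using has_derivative_compose[OF has_derivative_gradient has_derivative_norm[OF assms]] by simp
  moreover have "(\<lambda>w. hess_vec x w \<bullet> sgn (grad x)) = (\<lambda>w. (grad x \<bullet> hess_vec x w) / norm (grad x))"
    by (simp add: fun_eq_iff sgn_div_norm inner_commute divide_inverse)
  ultimately show ?thesis by simp
qed

lemma has_derivative_gauss_ext:
  assumes "grad x \<noteq> 0"
  shows "(gauss_ext has_derivative gauss_ext_deriv x) (at x)"
proof -
  have "((\<lambda>y. 1 + \<phi> y) has_derivative (\<lambda>w. grad x \<bullet> w)) (at x)"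
    using has_derivative_add[OF has_derivative_const[of 1] has_derivative_phi[of x]] by simp
  from has_derivative_divide[OF this has_derivative_norm_gradient[OF assms]] assms
  have "((\<lambda>y. (1 + \<phi> y) / norm (grad y)) has_derivative
     (\<lambda>w. (grad x \<bullet> w) / norm (grad x) - (1 + \<phi> x) * ((grad x \<bullet> hess_vec x w) / norm (grad x) ^ 3))) (at x)"
    by (simp add: divide_inverse power3_eq_cube algebra_simps)
  from has_derivative_scaleR[OF this has_derivative_gradient] show ?thesis
    unfolding gauss_ext_def[abs_def] gauss_ext_deriv_def[abs_def] by (simp add: add.commute)
qed

lemma continuous_on_gauss_ext_deriv:
  "continuous_on {x. grad x \<noteq> 0} (\<lambda>x. Blinfun (gauss_ext_deriv x))"
proof (rule continuous_on_blinfun_componentwise)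
  fix i :: 'a
  have "continuous_on {x. grad x \<noteq> 0} (\<lambda>x. gauss_ext_deriv x i)"
    unfolding gauss_ext_deriv_def using continuous_gradient continuous_phi continuous_hess_vec
    by (auto intro!: continuous_intros simp: continuous_at_imp_continuous_on)
  moreover have "gauss_ext_deriv x i = blinfun_apply (Blinfun (gauss_ext_deriv x)) i"
    if "x \<in> {x. grad x \<noteq> 0}" for x
    using has_derivative_gauss_ext that has_derivative_bounded_linear
    by (fastforce simp: bounded_linear_Blinfun_apply)
  ultimately show "continuous_on {x. grad x \<noteq> 0} (\<lambda>x. blinfun_apply (Blinfun (gauss_ext_deriv x)) i)"
    by (rule continuous_on_eq)
qed

lemma inj_gauss_ext_deriv:
  assumes x: "x \<in> M"
  shows "inj (gauss_ext_deriv x)"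
proof -
  have lin: "linear (gauss_ext_deriv x)"
    using has_derivative_gauss_ext[OF gradient_nonzero[OF x]] has_derivative_linear by blast
  define g where "g = norm (grad x)"
  have g: "g > 0" using gradient_nonzero[OF x] by (simp add: g_def)
  show ?thesis
  proof (rule linear_injective_0[OF lin, THEN iffD2], intro allI impI)
    fix w assume w0: "gauss_ext_deriv x w = 0"
    define c where "c = (grad x \<bullet> w) / g - (grad x \<bullet> hess_vec x w) / g ^ 3"
    have Dw: "gauss_ext_deriv x w = c *\<^sub>R grad x + (1 / g) *\<^sub>R hess_vec x w"
      using x by (simp add: gauss_ext_deriv_def c_def g_def M_def)
    have "0 = gauss_ext_deriv x w \<bullet> grad x" using w0 by simp
    also have "\<dots> = c * g ^ 2 + (grad x \<bullet> hess_vec x w) / g"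
      by (simp add: Dw inner_add_left g_def power2_norm_eq_inner inner_commute[of "hess_vec x w"])
    also have "\<dots> = (grad x \<bullet> w) * g"
      using g by (simp add: c_def field_simps power2_eq_square power3_eq_cube)
    finally have gw: "grad x \<bullet> w = 0" using g by simp
    have "0 = gauss_ext_deriv x w \<bullet> w" using w0 by simp
    also have "\<dots> = hessian \<phi> x w w / g"
      using gw by (simp add: Dw inner_add_left inner_hess_vec)
    finally have "hessian \<phi> x w w = 0" using g by simp
    then show "w = 0"
      using curvature x gw by (metis inner_commute less_irrefl)
  qed
qed

lemma support_point_differentiable:
  assumes z0: "z0 \<noteq> 0"
  obtains A where "(support_point has_derivative A) (at z0)"
proof -
  define x0 where "x0 = support_point z0"
  have x0: "x0 \<in> M" "grad x0 \<noteq> 0"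
    using support_point_in_M[OF z0] gradient_nonzero by (auto simp: x0_def)
  have bl: "bounded_linear (gauss_ext_deriv x)" if "grad x \<noteq> 0" for x
    using has_derivative_gauss_ext[OF that] has_derivative_bounded_linear by blast
  obtain g where g: "linear g" "g \<circ> gauss_ext_deriv x0 = id"
    using linear_injective_left_inverse[OF bounded_linear.linear[OF bl[OF x0(2)]]
        inj_gauss_ext_deriv[OF x0(1)]] by blast
  have "bounded_linear g" using g(1) linear_conv_bounded_linear by blast
  then have inv: "Blinfun g o\<^sub>L Blinfun (gauss_ext_deriv x0) = id_blinfun"
    using g(2) bl[OF x0(2)]
    by (intro blinfun_eqI) (simp add: bounded_linear_Blinfun_apply fun_eq_iff)
  have derf: "(gauss_ext has_derivative blinfun_apply (Blinfun (gauss_ext_deriv x))) (at x)"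
    if "x \<in> {x. grad x \<noteq> 0}" for x
    using has_derivative_gauss_ext bl that by (simp add: bounded_linear_Blinfun_apply)
  from x0(2) have x0_regular: "x0 \<in> {x. grad x \<noteq> 0}" by simp
  obtain U V h h' where UV: "open U" "x0 \<in> U" "open V" "gauss_ext x0 \<in> V"
    "homeomorphism U V gauss_ext h" "\<And>y. y \<in> V \<Longrightarrow> (h has_derivative h' y) (at y)"
    by (rule inverse_function_theorem[OF open_regular_points derf continuous_on_gauss_ext_deriv x0_regular inv])
      (assumption, rule that, assumption+)
  define W where "W = support_point -` U \<inter> - {0}"
  have "open W"
    using continuous_on_open_vimage[of "- {0}" support_point, OF open_Compl[OF closed_singleton]]
      continuous_on_support_point UV(1)
    unfolding W_def by blast
  have "z0 \<in> W" using z0 UV(2) by (simp add: W_def x0_def)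
  have h_normalize: "h (z /\<^sub>R norm z) = support_point z" if "z \<in> W" for z
  proof -
    have "z \<noteq> 0" "support_point z \<in> U" using that by (auto simp: W_def)
    moreover have "\<forall>x\<in>U. h (gauss_ext x) = x" using UV(5) by (simp add: homeomorphism_def)
    ultimately show ?thesis
      using gauss_ext_eq_gauss_map[OF support_point_in_M[OF \<open>z \<noteq> 0\<close>]]
        gauss_map_support_point[OF \<open>z \<noteq> 0\<close>] by metis
  qed
  have "z0 /\<^sub>R norm z0 \<in> V"
    using UV(4) gauss_ext_eq_gauss_map[OF x0(1)] gauss_map_support_point[OF z0] by (simp add: x0_def)
  from has_derivative_compose[OF has_derivative_normalize[OF z0] UV(6)[OF this]]
  have "(support_point has_derivative
      (\<lambda>v. h' (z0 /\<^sub>R norm z0) (v /\<^sub>R norm z0 - ((z0 \<bullet> v) / norm z0 ^ 3) *\<^sub>R z0))) (at z0)"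
    by (rule has_derivative_transform_within_open[OF _ \<open>open W\<close> \<open>z0 \<in> W\<close> h_normalize])
  then show ?thesis using that by blast
qed

text \<open>Differentiating \<phi> \<circ> support_point = 0 and gauss_ext \<circ> support_point = normalization.\<close>
lemma support_point_derivative:
  assumes z0: "z0 \<noteq> 0" and A: "(support_point has_derivative A) (at z0)"
  shows "z0 \<bullet> A u = 0" and "A u = 0 \<Longrightarrow> \<exists>c. u = c *\<^sub>R z0"
proof -
  define x0 where "x0 = support_point z0"
  have x0: "x0 \<in> M" "grad x0 \<noteq> 0"
    using support_point_in_M[OF z0] gradient_nonzero by (auto simp: x0_def)
  have near: "z0 \<in> - {0}" "open (- {0::'a})" using z0 by auto
  have "((\<lambda>z. \<phi> (support_point z)) has_derivative (\<lambda>v. grad x0 \<bullet> A v)) (at z0)"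
    using has_derivative_compose[OF A has_derivative_phi] by (simp add: x0_def)
  moreover have "((\<lambda>z. \<phi> (support_point z)) has_derivative (\<lambda>v. 0)) (at z0)"
    by (rule has_derivative_transform_within_open[OF has_derivative_const near(2,1)])
      (use support_point_in_M in \<open>auto simp: M_def\<close>)
  ultimately have "(\<lambda>v. grad x0 \<bullet> A v) = (\<lambda>v. 0)" by (rule has_derivative_unique)
  then have "grad x0 \<bullet> A u = 0" by (rule fun_cong)
  moreover have "grad x0 = (norm (grad x0) / norm z0) *\<^sub>R z0"
    using gradient_eq_scaled_gauss_map[OF x0(1)] gauss_map_support_point[OF z0]
    by (simp add: x0_def divide_inverse)
  then have "grad x0 \<bullet> A u = (norm (grad x0) / norm z0) * (z0 \<bullet> A u)"
    by (metis inner_scaleR_left)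
  ultimately have "(norm (grad x0) / norm z0) * (z0 \<bullet> A u) = 0" by simp
  then show "z0 \<bullet> A u = 0" using x0(2) z0 by simp
  have "((\<lambda>z. gauss_ext (support_point z)) has_derivative (\<lambda>v. gauss_ext_deriv x0 (A v))) (at z0)"
    using has_derivative_compose[OF A has_derivative_gauss_ext[OF x0(2)[unfolded x0_def]]]
    by (simp add: x0_def)
  moreover have "((\<lambda>z. gauss_ext (support_point z)) has_derivative
      (\<lambda>v. v /\<^sub>R norm z0 - ((z0 \<bullet> v) / norm z0 ^ 3) *\<^sub>R z0)) (at z0)"
    by (rule has_derivative_transform_within_open[OF has_derivative_normalize[OF z0] near(2,1)])
      (use support_point_in_M gauss_ext_eq_gauss_map gauss_map_support_point in auto)
  ultimately have "(\<lambda>v. gauss_ext_deriv x0 (A v)) = (\<lambda>v. v /\<^sub>R norm z0 - ((z0 \<bullet> v) / norm z0 ^ 3) *\<^sub>R z0)"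
    by (rule has_derivative_unique)
  then have eq: "gauss_ext_deriv x0 (A u) = u /\<^sub>R norm z0 - ((z0 \<bullet> u) / norm z0 ^ 3) *\<^sub>R z0"
    by (rule fun_cong)
  assume "A u = 0"
  moreover have "gauss_ext_deriv x0 0 = 0"
    using has_derivative_gauss_ext[OF x0(2)] has_derivative_linear linear_0 by blast
  ultimately have "u /\<^sub>R norm z0 = ((z0 \<bullet> u) / norm z0 ^ 3) *\<^sub>R z0" using eq by simp
  then have "norm z0 *\<^sub>R (u /\<^sub>R norm z0) = norm z0 *\<^sub>R (((z0 \<bullet> u) / norm z0 ^ 3) *\<^sub>R z0)" by simp
  then have "u = (norm z0 * ((z0 \<bullet> u) / norm z0 ^ 3)) *\<^sub>R z0" using z0 by simp
  then show "\<exists>c. u = c *\<^sub>R z0" by blast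
qed

section \<open>The twist condition\<close>

lemma mixed_D12_iso_gen_fun:
  assumes n1: "norm n1 = 1" and n2: "norm n2 = 1" and "n1 \<noteq> n2"
  shows "mixed_D12_iso (gen_fun M G) n1 n2"
proof -
  define d where "d = n1 - n2"
  have "d \<noteq> 0" using \<open>n1 \<noteq> n2\<close> by (simp add: d_def)
  then obtain A where A: "(support_point has_derivative A) (at d)"
    using support_point_differentiable by blast
  define g where "g x = - tangent_proj n2 (support_point (x - n2))" for x
  define L where "L v = - tangent_proj n2 (A (tangent_proj n1 v))" for v
  have "sphere_grad (\<lambda>y. gen_fun M G x y) n2 (g x)" if "x \<in> sphere 0 1" "x \<noteq> n2" for x
    using sphere_grad_gen_fun_right[of x n2] that n2 by (simp add: g_def)
  moreover have "((\<lambda>x. g (x /\<^sub>R norm x)) has_derivative L) (at n1)"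
  proof -
    have "((\<lambda>x. x /\<^sub>R norm x - n2) has_derivative tangent_proj n1) (at n1)"
      using has_derivative_diff[OF has_derivative_normalize_unit[OF n1] has_derivative_const] by simp
    moreover have "(support_point has_derivative A) (at (n1 /\<^sub>R norm n1 - n2))" using A n1 by (simp add: d_def)
    ultimately have "((\<lambda>x. support_point (x /\<^sub>R norm x - n2)) has_derivative (\<lambda>v. A (tangent_proj n1 v))) (at n1)"
      by (rule has_derivative_compose)
    from bounded_linear.has_derivative[OF bounded_linear_minus[OF bounded_linear_tangent_proj] this]
    show ?thesis unfolding g_def L_def[abs_def] .
  qed
  moreover have "bij_betw L {u. u \<bullet> n1 = 0} {w. w \<bullet> n2 = 0}"
  proof -
    have lin: "linear A" using A has_derivative_linear by blast
    have "bij_betw (\<lambda>u. tangent_proj n2 (- A (tangent_proj n1 u))) {u. u \<bullet> n1 = 0} {w. w \<bullet> n2 = 0}"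
    proof (rule bij_betw_tangent_proj_comp[where z = d])
      show "linear (\<lambda>v. - A v)" using lin by (simp add: linear_compose_neg)
      show "n1 \<bullet> d \<noteq> 0" using unit_inner_diff_pos[OF n1 n2 \<open>n1 \<noteq> n2\<close>] by (simp add: d_def)
      show "n2 \<bullet> d \<noteq> 0" using unit_inner_diff_pos[OF n2 n1] \<open>n1 \<noteq> n2\<close>
        by (simp add: d_def inner_diff_right)
      show "d \<bullet> - A u = 0" for u using support_point_derivative(1)[OF \<open>d \<noteq> 0\<close> A] by simp
      show "- A u = 0 \<Longrightarrow> \<exists>c. u = c *\<^sub>R d" for u using support_point_derivative(2)[OF \<open>d \<noteq> 0\<close> A] by simp
    qed (use n1 n2 in auto)
    moreover have "L = (\<lambda>u. tangent_proj n2 (- A (tangent_proj n1 u)))"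
      by (simp add: L_def[abs_def] linear_neg[OF linear_tangent_proj])
    ultimately show ?thesis by simp
  qed
  ultimately show ?thesis unfolding mixed_D12_iso_def by blast
qed

lemma mixed_D21_iso_gen_fun:
  assumes n1: "norm n1 = 1" and n2: "norm n2 = 1" and "n1 \<noteq> n2"
  shows "mixed_D12_iso (\<lambda>y x. gen_fun M G x y) n2 n1"
proof -
  define d where "d = n1 - n2"
  have "d \<noteq> 0" using \<open>n1 \<noteq> n2\<close> by (simp add: d_def)
  then obtain A where A: "(support_point has_derivative A) (at d)"
    using support_point_differentiable by blast
  define g where "g y = tangent_proj n1 (support_point (n1 - y))" for y
  define L where "L v = tangent_proj n1 (A (- tangent_proj n2 v))" for v
  have "sphere_grad (\<lambda>x. gen_fun M G x y) n1 (g y)" if "y \<in> sphere 0 1" "y \<noteq> n1" for y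
    using sphere_grad_gen_fun_left[of n1 y] that n1 by (simp add: g_def)
  moreover have "((\<lambda>y. g (y /\<^sub>R norm y)) has_derivative L) (at n2)"
  proof -
    have "((\<lambda>y. n1 - y /\<^sub>R norm y) has_derivative (\<lambda>v. - tangent_proj n2 v)) (at n2)"
      using has_derivative_diff[OF has_derivative_const has_derivative_normalize_unit[OF n2]] by simp
    moreover have "(support_point has_derivative A) (at (n1 - n2 /\<^sub>R norm n2))" using A n2 by (simp add: d_def)
    ultimately have "((\<lambda>y. support_point (n1 - y /\<^sub>R norm y)) has_derivative (\<lambda>v. A (- tangent_proj n2 v))) (at n2)"
      by (rule has_derivative_compose)
    from bounded_linear.has_derivative[OF bounded_linear_tangent_proj this]
    show ?thesis unfolding g_def L_def[abs_def] .
  qed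
  moreover have "bij_betw L {u. u \<bullet> n2 = 0} {w. w \<bullet> n1 = 0}"
  proof -
    have lin: "linear A" using A has_derivative_linear by blast
    have "bij_betw (\<lambda>u. tangent_proj n1 (A (- tangent_proj n2 u))) {u. u \<bullet> n2 = 0} {w. w \<bullet> n1 = 0}"
    proof (rule bij_betw_tangent_proj_comp[where z = d and B = "\<lambda>v. A (- v)"])
      show "linear (\<lambda>v. A (- v))" using linear_compose[OF linear_uminus lin] by (simp add: o_def)
      show "n1 \<bullet> d \<noteq> 0" using unit_inner_diff_pos[OF n1 n2 \<open>n1 \<noteq> n2\<close>] by (simp add: d_def)
      show "n2 \<bullet> d \<noteq> 0" using unit_inner_diff_pos[OF n2 n1] \<open>n1 \<noteq> n2\<close>
        by (simp add: d_def inner_diff_right)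
      show "d \<bullet> A (- u) = 0" for u using support_point_derivative(1)[OF \<open>d \<noteq> 0\<close> A] .
      show "A (- u) = 0 \<Longrightarrow> \<exists>c. u = c *\<^sub>R d" for u
        using support_point_derivative(2)[OF \<open>d \<noteq> 0\<close> A, of "- u"]
        by (metis minus_minus scaleR_minus_left)
    qed (use n1 n2 in auto)
    then show ?thesis by (simp add: L_def[abs_def])
  qed
  ultimately show ?thesis unfolding mixed_D12_iso_def by blast
qed

end

theorem theorem5p2:
  fixes \<phi> :: "'a::euclidean_space \<Rightarrow> real" and K M :: "'a set"
  assumes smooth: "smooth_on UNIV \<phi>"
    and K_def: "K = {x. \<phi> x \<le> 0}"
    and M_def: "M = {x. \<phi> x = 0}"
    and compact: "compact K" and convex: "convex K" and domain: "interior K \<noteq> {}"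
    and regular: "\<forall>x\<in>M. gradient \<phi> x \<noteq> 0"
    and curvature: "\<forall>x\<in>M. \<forall>v. v \<noteq> 0 \<and> inner v (gradient \<phi> x) = 0 \<longrightarrow> hessian \<phi> x v v > 0"
  shows "(\<forall>n1\<in>sphere 0 1. \<forall>n2\<in>sphere 0 1. \<forall>m1 m2. n1 \<noteq> n2 \<and> inner m1 n1 = 0 \<and> inner m2 n2 = 0 \<longrightarrow>
            (billiard_step K M (gauss_map \<phi>) (m1, n1) (m2, n2) \<longleftrightarrow>
               sphere_grad (\<lambda>x. gen_fun M (gauss_map \<phi>) x n2) n1 m1 \<and> sphere_grad (\<lambda>y. gen_fun M (gauss_map \<phi>) n1 y) n2 (- m2)))
       \<and> (\<forall>n1\<in>sphere 0 1. \<forall>n2\<in>sphere 0 1. n1 \<noteq> n2 \<longrightarrow>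
            mixed_D12_iso (gen_fun M (gauss_map \<phi>)) n1 n2 \<and> mixed_D12_iso (\<lambda>y x. gen_fun M (gauss_map \<phi>) x y) n2 n1)"
proof -
  interpret convex_billiard_table \<phi> K M
    using assms by unfold_locales
  show ?thesis
    using billiard_step_iff sphere_grad_gen_fun_iff mixed_D12_iso_gen_fun mixed_D21_iso_gen_fun
    by simp
qed

end
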